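(* Let $A$ be a real $m\times n$ matrix with $r:=\operatorname{rank}(A)<n$, $k:=n-r$, $\beta\in\mathbb R_m$, $y\in\mathbb R_n$ with $Ay^T=\beta^T$, and $F\in S(A,\beta)$. Let $(x_1^T,\dots,x_k^T)$ be a basis of $\ker(A)$, $X$ the $k\times n$ matrix with rows $x_1,\dots,x_k$, $\pi_s(u):=u^{x_s}$ for $u\in\mathbb R_n^+$, $\psi(w):=\exp(X^\dagger\log(w)^T)$ and $G(w):=F(\psi(w))/\psi(w)^y$ for $w\in\mathbb R_k^+$. Then $F(v)=G(\pi_1(v),\dots,\pi_k(v))v^y$ for all $v\in\mathbb R_n^+$, and $G$ is the unique function $H:\mathbb R_k^+\to\mathbb R$ such that $F(v)=H(\pi_1(v),\dots,\pi_k(v))v^y$ for every $v\in\mathbb R_n^+$.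
   Context: $\mathbb R_m$ denotes real row vectors of length $m$, $\mathbb R_m^+$ those with all entries strictly positive (similarly for $n,k$). For $c\in\mathbb R_m^+$, $\alpha\in\mathbb R_m$, $c^\alpha:=\prod_i c_i^{\alpha_i}$. For positive row vector $w$, $\log(w)$ is taken entrywise (as a row vector); for a column vector $z$, $\exp(z)$ is the row vector of entrywise exponentials. $B^\dagger$ is the Moore–Penrose pseudoinverse. For a real $m\times n$ matrix $A$ with columns $\alpha_1^T,\dots,\alpha_n^T$ and $\beta\in\mathbb R_m$, $S(A,\beta)$ is the set of all $F:\mathbb R_n^+\to\mathbb R$ with $F(v_1c^{\alpha_1},\dots,v_nc^{\alpha_n})=F(v_1,\dots,v_n)c^\beta$ for all $v_1,\dots,v_n>0$ and all $c\in\mathbb R_m^+$. *)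

theory Defs
  imports "HOL-Analysis.Analysis"
begin

definition pos_vec :: "real^'n \<Rightarrow> bool" where
  "pos_vec v \<longleftrightarrow> (\<forall>i. 0 < v $ i)"

definition vpow :: "real^'n \<Rightarrow> real^'n \<Rightarrow> real" where
  "vpow c \<alpha> = (\<Prod>i\<in>UNIV. (c $ i) powr (\<alpha> $ i))"

definition S_class :: "real^'n^'m \<Rightarrow> real^'m \<Rightarrow> (real^'n \<Rightarrow> real) set" where
  "S_class A \<beta> = {F. \<forall>v c. pos_vec v \<longrightarrow> pos_vec c \<longrightarrow>
      F (\<chi> j. v $ j * vpow c (column j A)) = F v * vpow c \<beta>}"

definition pinv :: "real^'n^'m \<Rightarrow> real^'m^'n" where
  "pinv B = (THE P. B ** P ** B = B \<and> P ** B ** P = P \<and>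
       transpose (B ** P) = B ** P \<and> transpose (P ** B) = P ** B)"

end

theory Submission imports Defs begin

text \<open>
  In logarithmic coordinates \<open>v = exp a\<close>, membership in \<open>S(A,\<beta>)\<close> says that \<open>F(exp a)\<close> and
  \<open>(exp a)\<^sup>y\<close> acquire the same factor \<open>e\<^sup>\<beta>\<^sup>\<cdot>\<^sup>z\<close> when \<open>a\<close> is moved by \<open>A\<^sup>T z\<close>; so
  their quotient only depends on \<open>a\<close> modulo the row space of \<open>A\<close>, the orthogonal complement
  of \<open>ker A = span (rows X)\<close>. Since \<open>X\<close> has full row rank, \<open>X\<^sup>\<dagger>\<close> is a right inverse of \<open>X\<close>,
  so \<open>a - X\<^sup>\<dagger> X a\<close> is killed by \<open>X\<close>, i.e. lies in that row space, and the quotient is a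
  function of \<open>X a = log \<pi>(exp a)\<close> alone. Uniqueness holds because \<open>\<pi>\<close> maps the positive
  orthant onto the positive orthant.
\<close>

definition penrose :: "real^'n^'m \<Rightarrow> real^'m^'n \<Rightarrow> bool" where
  "penrose B P \<longleftrightarrow> B ** P ** B = B \<and> P ** B ** P = P \<and>
     transpose (B ** P) = B ** P \<and> transpose (P ** B) = P ** B"

lemma penrose_unique:
  assumes "penrose B P" and "penrose B Q"
  shows "P = Q"
proof -
  have BPB: "B ** P ** B = B" and BP: "transpose (B ** P) = B ** P"
    and PBP: "P ** B ** P = P" and PB: "transpose (P ** B) = P ** B"
    using assms(1) by (auto simp: penrose_def)
  have BQB: "B ** Q ** B = B" and BQ: "transpose (B ** Q) = B ** Q"
    and QB: "transpose (Q ** B) = Q ** B"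
    using assms(2) by (auto simp: penrose_def)
  have "B ** P = (B ** Q) ** (B ** P)" using BQB by (simp add: matrix_mul_assoc)
  also have "\<dots> = transpose (B ** Q) ** transpose (B ** P)" using BP BQ by simp
  also have "\<dots> = transpose (B ** P ** B ** Q)" by (simp add: matrix_transpose_mul matrix_mul_assoc)
  also have "\<dots> = B ** Q" using BPB BQ by simp
  finally have BP_BQ: "B ** P = B ** Q" .
  have "P ** B = (P ** B) ** (Q ** B)" by (metis BQB matrix_mul_assoc)
  also have "\<dots> = transpose (P ** B) ** transpose (Q ** B)" using PB QB by simp
  also have "\<dots> = transpose (Q ** B ** P ** B)" by (simp add: matrix_transpose_mul matrix_mul_assoc)
  also have "\<dots> = Q ** B" by (metis BPB QB matrix_mul_assoc)
  finally have PB_QB: "P ** B = Q ** B" .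
  have "P = P ** (B ** Q)" by (metis PBP BP_BQ matrix_mul_assoc)
  also have "\<dots> = Q ** B ** Q" by (metis PB_QB matrix_mul_assoc)
  also have "\<dots> = Q" using assms(2) by (simp add: penrose_def)
  finally show ?thesis .
qed

lemma pinv_eqI: "penrose B P \<Longrightarrow> pinv B = P"
  unfolding pinv_def penrose_def[symmetric] using penrose_unique by blast

lemma transpose_kernel_trivial_if_independent_rows:
  fixes X :: "real^'n^'k"
  assumes inj: "inj (\<lambda>s. row s X)" and indep: "independent (rows X)"
    and z: "transpose X *v z = 0"
  shows "z = 0"
proof -
  have rows: "rows X = range (\<lambda>s. row s X)" by (auto simp: rows_def)
  define c where "c = (\<lambda>r. z $ inv (\<lambda>s. row s X) r)"
  have "(\<Sum>r\<in>rows X. c r *\<^sub>R r) = (\<Sum>s\<in>UNIV. z $ s *\<^sub>R row s X)"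
    unfolding rows c_def by (simp add: sum.reindex[OF inj] inv_f_f[OF inj])
  also have "\<dots> = 0"
    using z by (simp add: matrix_mult_sum scalar_mult_eq_scaleR)
  finally have "\<forall>r\<in>rows X. c r = 0"
    using indep real_vector.dependent_finite[of "rows X"] unfolding rows by auto
  then show ?thesis
    unfolding rows c_def by (auto simp: inv_f_f[OF inj] vec_eq_iff)
qed

lemma symmetric_right_inverse_symmetric:
  fixes M N :: "'a::comm_semiring_1^'n^'n"
  assumes "transpose M = M" and "M ** N = mat 1"
  shows "transpose N = N"
proof -
  have "transpose N ** M = mat 1"
    by (metis assms matrix_transpose_mul transpose_mat)
  then show ?thesis
    by (metis assms(2) matrix_mul_assoc matrix_mul_lid matrix_mul_rid)
qed

text \<open>For \<open>X\<close> of full row rank, \<open>X\<^sup>\<dagger> = X\<^sup>T (X X\<^sup>T)\<^sup>-\<^sup>1\<close>.\<close>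

lemma pinv_right_inverse:
  fixes X :: "real^'n^'k"
  assumes inj: "inj (\<lambda>s. row s X)" and indep: "independent (rows X)"
  shows "X ** pinv X = mat 1"
proof -
  define M where "M = X ** transpose X"
  have "z = 0" if "M *v z = 0" for z
  proof -
    have "(transpose X *v z) \<bullet> (transpose X *v z) = z \<bullet> (M *v z)"
      unfolding M_def by (simp add: matrix_vector_mul_assoc[symmetric] dot_lmul_matrix)
    with that have "transpose X *v z = 0" by simp
    then show ?thesis using transpose_kernel_trivial_if_independent_rows[OF inj indep] by blast
  qed
  then obtain N where "N ** M = mat 1"
    using matrix_left_invertible_ker by blast
  then have MN: "M ** N = mat 1" using matrix_left_right_inverse by blast
  have "transpose M = M" unfolding M_def by (simp add: matrix_transpose_mul)
  then have N_sym: "transpose N = N" using MN by (rule symmetric_right_inverse_symmetric)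
  define P where "P = transpose X ** N"
  have XP: "X ** P = mat 1"
    unfolding P_def using MN by (simp add: M_def matrix_mul_assoc)
  have "transpose (P ** X) = P ** X"
    by (simp add: P_def matrix_transpose_mul N_sym matrix_mul_assoc)
  then have "penrose X P"
    unfolding penrose_def using XP by (metis matrix_mul_assoc matrix_mul_lid matrix_mul_rid transpose_mat)
  then show ?thesis using XP by (simp add: pinv_eqI)
qed

lemma orthogonal_null_space_in_range_transpose:
  fixes A :: "real^'n^'m"
  assumes orth: "\<And>v. A *v v = 0 \<Longrightarrow> t \<bullet> v = 0"
  shows "t \<in> range (\<lambda>z. transpose A *v z)"
proof -
  define S where "S = range (\<lambda>z. transpose A *v z)"
  have "subspace S"
    unfolding S_def by (rule linear_subspace_image[OF matrix_vector_mul_linear subspace_UNIV])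
  obtain p q where p: "p \<in> span S" and q: "\<And>w. w \<in> span S \<Longrightarrow> orthogonal q w"
    and t: "t = p + q"
    using orthogonal_subspace_decomp_exists[of S t] by metis
  have "(A *v q) \<bullet> (A *v q) = q \<bullet> (transpose A *v (A *v q))"
    by (metis dot_lmul_matrix inner_commute transpose_matrix_vector)
  also have "\<dots> = 0"
    using q by (simp add: S_def span_base orthogonal_def)
  finally have "t \<bullet> q = 0" using orth by simp
  moreover have "p \<bullet> q = 0"
    using q[OF p] by (simp add: orthogonal_def inner_commute)
  ultimately have "q = 0"
    by (simp add: t inner_add_left)
  then have "t \<in> S"
    using t p \<open>subspace S\<close> by (metis add.right_neutral span_eq_iff)
  then show ?thesis unfolding S_def .
qed

lemma orthogonal_span_rows:
  fixes X :: "real^'n^'k"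
  assumes "X *v t = 0" and "v \<in> span (rows X)"
  shows "t \<bullet> v = 0"
proof -
  have "orthogonal t r" if r: "r \<in> rows X" for r
  proof -
    obtain s where "r = row s X" using r unfolding rows_def by blast
    moreover have "(X *v t) $ s = 0" using assms(1) by simp
    ultimately show ?thesis
      by (simp add: matrix_vector_mul_component orthogonal_def row_def inner_commute)
  qed
  then show ?thesis
    using orthogonal_to_span[OF assms(2)] by (simp add: orthogonal_def)
qed

definition lnv :: "real^'n \<Rightarrow> real^'n" where "lnv c = (\<chi> i. ln (c $ i))"
definition expv :: "real^'n \<Rightarrow> real^'n" where "expv x = (\<chi> i. exp (x $ i))"

lemma vpow_expv: "vpow (expv x) a = exp (a \<bullet> x)"
  by (simp add: vpow_def expv_def powr_def inner_vec_def exp_sum mult.commute)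

lemma pos_vec_expv: "pos_vec (expv x)"
  by (simp add: pos_vec_def expv_def)

lemma lnv_expv [simp]: "lnv (expv x) = x"
  by (simp add: lnv_def expv_def)

lemma expv_lnv: "pos_vec c \<Longrightarrow> expv (lnv c) = c"
  by (simp add: pos_vec_def lnv_def expv_def vec_eq_iff)

lemma vpow_pos_vec: "pos_vec c \<Longrightarrow> vpow c a = exp (a \<bullet> lnv c)"
  by (metis expv_lnv vpow_expv)

lemma vpow_expv_column: "vpow (expv z) (column j A) = exp ((transpose A *v z) $ j)"
proof -
  have "(transpose A *v z) $ j = column j A \<bullet> z"
    by (simp add: matrix_vector_mul_component column_def transpose_def)
  then show ?thesis by (simp add: vpow_expv)
qed

lemma S_class_expv_shift:
  assumes "F \<in> S_class A \<beta>"
  shows "F (expv (a + transpose A *v z)) = F (expv a) * exp (\<beta> \<bullet> z)"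
proof -
  have "F (\<chi> j. expv a $ j * vpow (expv z) (column j A)) = F (expv a) * vpow (expv z) \<beta>"
    using assms pos_vec_expv[of a] pos_vec_expv[of z] unfolding S_class_def by simp
  moreover have "(\<chi> j. expv a $ j * vpow (expv z) (column j A)) = expv (a + transpose A *v z)"
    unfolding vpow_expv_column by (simp add: vec_eq_iff expv_def exp_add)
  ultimately show ?thesis by (simp add: vpow_expv)
qed

lemma vpow_expv_shift:
  assumes "A *v y = \<beta>"
  shows "vpow (expv (a + transpose A *v z)) y = vpow (expv a) y * exp (\<beta> \<bullet> z)"
proof -
  have "y \<bullet> (transpose A *v z) = \<beta> \<bullet> z"
    by (metis assms dot_lmul_matrix inner_commute transpose_matrix_vector)
  then show ?thesis by (simp add: vpow_expv inner_add_right exp_add)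
qed

lemma S_class_quotient_shift_invariant:
  assumes "F \<in> S_class A \<beta>" and "A *v y = \<beta>"
  shows "F (expv (a + transpose A *v z)) / vpow (expv (a + transpose A *v z)) y
    = F (expv a) / vpow (expv a) y"
  using S_class_expv_shift[OF assms(1)] vpow_expv_shift[OF assms(2)] by (simp add: vpow_expv)

lemma S_class_quotient_factors:
  fixes X :: "real^'n^'k"
  assumes F: "F \<in> S_class A \<beta>" and y: "A *v y = \<beta>" and XP: "X ** P = mat 1"
    and ker: "\<And>t. X *v t = 0 \<Longrightarrow> t \<in> range (\<lambda>z. transpose A *v z)"
    and v: "pos_vec v"
  shows "F v / vpow v y
    = F (expv (P *v (X *v lnv v))) / vpow (expv (P *v (X *v lnv v))) y"
proof -
  define b where "b = P *v (X *v lnv v)"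
  have "X *v b = (X ** P) *v (X *v lnv v)"
    unfolding b_def by (rule matrix_vector_mul_assoc)
  then have "X *v b = X *v lnv v"
    using XP by simp
  then have "X *v (lnv v - b) = 0"
    by (simp add: matrix_vector_mult_diff_distrib)
  then obtain z where "lnv v = b + transpose A *v z"
    using ker by (metis add_diff_cancel_left' diff_add_cancel imageE)
  then have "v = expv (b + transpose A *v z)"
    using expv_lnv[OF v] by simp
  then show ?thesis
    unfolding b_def[symmetric] using S_class_quotient_shift_invariant[OF F y] by simp
qed

theorem mainTheorem5:
  fixes A :: "real^'n^'m" and \<beta> :: "real^'m" and y :: "real^'n"
    and F :: "real^'n \<Rightarrow> real" and X :: "real^'n^'k"
  assumes rank_lt: "rank A < CARD('n)"
    and k_def: "CARD('k) = CARD('n) - rank A"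
    and y_sol: "A *v y = \<beta>"
    and F_S: "F \<in> S_class A \<beta>"
    and X_inj: "inj (\<lambda>s. row s X)"
    and X_indep: "independent (rows X)"
    and X_span: "span (rows X) = {v. A *v v = 0}"
  defines "\<pi> \<equiv> (\<lambda>u::real^'n. \<chi> s::'k. vpow u (row s X))"
    and "G \<equiv> (\<lambda>w::real^'k.
           F (\<chi> j::'n. exp ((pinv X *v (\<chi> s. ln (w $ s))) $ j)) /
           vpow (\<chi> j::'n. exp ((pinv X *v (\<chi> s. ln (w $ s))) $ j)) y)"
  shows "(\<forall>v. pos_vec v \<longrightarrow> F v = G (\<pi> v) * vpow v y) \<and>
         (\<forall>H :: real^'k \<Rightarrow> real.
            (\<forall>v. pos_vec v \<longrightarrow> F v = H (\<pi> v) * vpow v y) \<longrightarrow>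
            (\<forall>w. pos_vec w \<longrightarrow> H w = G w))"
proof -
  define P where "P = pinv X"
  have XP: "X ** P = mat 1"
    unfolding P_def using X_inj X_indep by (rule pinv_right_inverse)
  have ker: "X *v t = 0 \<Longrightarrow> t \<in> range (\<lambda>z. transpose A *v z)" for t
    using orthogonal_null_space_in_range_transpose orthogonal_span_rows X_span by blast
  have G: "G w = F (expv (P *v lnv w)) / vpow (expv (P *v lnv w)) y" for w
    by (simp add: G_def P_def expv_def lnv_def)
  have \<pi>: "\<pi> u = expv (X *v lnv u)" if "pos_vec u" for u
    using that by (simp add: \<pi>_def expv_def vpow_pos_vec matrix_vector_mul_component row_def)
  have vpow_pos: "vpow (expv a) y > 0" for a
    by (simp add: vpow_expv)
  have factor: "F v = G (\<pi> v) * vpow v y" if "pos_vec v" for v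
    using S_class_quotient_factors[OF F_S y_sol XP ker that] G \<pi>[OF that]
      vpow_pos[of "lnv v"] expv_lnv[OF that] by (simp add: field_simps)
  have unique: "H w = G w"
    if H: "\<forall>v. pos_vec v \<longrightarrow> F v = H (\<pi> v) * vpow v y" and w: "pos_vec w" for H w
  proof -
    have "\<pi> (expv (P *v lnv w)) = w"
      using \<pi>[OF pos_vec_expv] expv_lnv[OF w] by (simp add: matrix_vector_mul_assoc XP)
    then show ?thesis
      using H pos_vec_expv vpow_pos G by (metis nonzero_eq_divide_eq order_less_irrefl)
  qed
  show ?thesis using factor unique by blast
qed

end
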